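(* Let periodic point sets $S,Q\subset\mathbb R^n$ have bottleneck distance $d_B(S,Q)<r(Q)$, where the packing radius $r(Q)$ is the minimum half-distance between any two distinct points of $Q$. Then for any radius $\alpha\ge0$, $\mathrm{EMD}(I(S;\alpha),I(Q;\alpha))\le 2d_B(S,Q)$.
   Context: A periodic point set is $S=M+\Lambda\subset\mathbb R^n$ with $\Lambda=\{\sum c_iv_i:c_i\in\mathbb Z\}$ a lattice, $U=\{\sum c_iv_i:c_i\in[0,1)\}$ a unit cell and $M\subset U$ a finite motif of $m$ points. Bottleneck distance: $d_B(S,Q)=\inf_{g}\sup_{p\in S}|p-g(p)|$ over all bijections $g:S\to Q$. For $p\in S$, the $\alpha$-cluster $C(S,p;\alpha)=S\cap\bar B(p;\alpha)$ has center $p$; points $p,q$ are $\alpha$-equivalent if some isometry of $\mathbb R^n$ maps $C(S,p;\alpha)$ onto $C(S,q;\alpha)$ with $p\mapsto q$. The isoset $I(S;\alpha)$ is the unordered set of pairs $(\sigma,w)$, one for each $\alpha$-equivalence class meeting $M$ in $k$ points, where $\sigma$ is the isometry class (under center-preserving isometries) of the $\alpha$-cluster of one of these points and $w=k/m$. For finite $C,D\subset\mathbb R^n$: $d_H(C,D)=\max_{p\in C}\min_{q\in D}|p-q|$, $d_R(C,D)=\min_{f\in\mathrm O(\mathbb R^n)}d_H(f(C),D)$. For classes $\sigma,\xi$ represented by $C(S,p;\alpha),C(Q,q;\alpha)$, $d_C(\sigma,\xi)$ is the minimum $\varepsilon\in[0,\alpha]$ with $d_R(C(S,p;\alpha-\varepsilon)-p,C(Q,q;\alpha)-q)\le\varepsilon$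 and $d_R(C(Q,q;\alpha-\varepsilon)-q,C(S,p;\alpha)-p)\le\varepsilon$. For $I(S;\alpha)=\{(\sigma_i,w_i)\}_{i=1}^{m(S)}$, $I(Q;\alpha)=\{(\xi_j,v_j)\}_{j=1}^{m(Q)}$, $\mathrm{EMD}(I(S;\alpha),I(Q;\alpha))$ is the minimum of $\sum_{i,j}f_{ij}d_C(\sigma_i,\xi_j)$ over $f_{ij}\in[0,1]$ with $\sum_jf_{ij}\le w_i$, $\sum_if_{ij}\le v_j$, $\sum_{i,j}f_{ij}=1$. *)

theory Defs
  imports "HOL-Analysis.Analysis" "HOL-Library.Extended_Real"
begin

text \<open>Points live in an abstract Euclidean space 'a (= R^n, n = DIM('a)).
  A lattice basis is a linearly independent set B of DIM('a) vectors.\<close>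

definition lattice :: "'a::euclidean_space set \<Rightarrow> 'a set" where
  "lattice B = {(\<Sum>v\<in>B. c v *\<^sub>R v) | c. \<forall>v\<in>B. c v \<in> \<int>}"

definition unit_cell :: "'a::euclidean_space set \<Rightarrow> 'a set" where
  "unit_cell B = {(\<Sum>v\<in>B. c v *\<^sub>R v) | c. \<forall>v\<in>B. c v \<in> {0..<1}}"

definition periodic_rep :: "'a::euclidean_space set \<Rightarrow> 'a set \<Rightarrow> 'a set \<Rightarrow> bool" where
  "periodic_rep B M S \<longleftrightarrow>
     independent B \<and> card B = DIM('a) \<and>
     finite M \<and> M \<noteq> {} \<and> M \<subseteq> unit_cell B \<and>
     S = {p + l | p l. p \<in> M \<and> l \<in> lattice B}"

definition bottleneck_dist :: "'a::euclidean_space set \<Rightarrow> 'a set \<Rightarrow> ereal" where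
  "bottleneck_dist S Q = (INF g\<in>{g. bij_betw g S Q}. SUP p\<in>S. ereal (norm (p - g p)))"

definition packing_radius :: "'a::euclidean_space set \<Rightarrow> real" where
  "packing_radius Q = Inf {dist p q / 2 | p q. p \<in> Q \<and> q \<in> Q \<and> p \<noteq> q}"

definition cluster :: "'a::euclidean_space set \<Rightarrow> 'a \<Rightarrow> real \<Rightarrow> 'a set" where
  "cluster S p \<alpha> = S \<inter> cball p \<alpha>"

definition isometry :: "('a::euclidean_space \<Rightarrow> 'a) \<Rightarrow> bool" where
  "isometry f \<longleftrightarrow> (\<forall>x y. dist (f x) (f y) = dist x y)"

definition alpha_equiv :: "'a::euclidean_space set \<Rightarrow> real \<Rightarrow> 'a \<Rightarrow> 'a \<Rightarrow> bool" where
  "alpha_equiv S \<alpha> p q \<longleftrightarrow>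
     (\<exists>f. isometry f \<and> f ` cluster S p \<alpha> = cluster S q \<alpha> \<and> f p = q)"

definition dH :: "'a::euclidean_space set \<Rightarrow> 'a set \<Rightarrow> real" where
  "dH C D = Max ((\<lambda>p. Min ((\<lambda>q. dist p q) ` D)) ` C)"

definition dR :: "'a::euclidean_space set \<Rightarrow> 'a set \<Rightarrow> real" where
  "dR C D = (INF f\<in>{f. orthogonal_transformation f}. dH (f ` C) D)"

text \<open>Distance between the isometry classes of the alpha-clusters of p in S and q in Q.\<close>
definition dC :: "'a::euclidean_space set \<Rightarrow> 'a \<Rightarrow> 'a set \<Rightarrow> 'a \<Rightarrow> real \<Rightarrow> real" where
  "dC S p Q q \<alpha> = Inf {\<epsilon> \<in> {0..\<alpha>}.
       dR ((\<lambda>x. x - p) ` cluster S p (\<alpha> - \<epsilon>)) ((\<lambda>x. x - q) ` cluster Q q \<alpha>) \<le> \<epsilon> \<and>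
       dR ((\<lambda>x. x - q) ` cluster Q q (\<alpha> - \<epsilon>)) ((\<lambda>x. x - p) ` cluster S p \<alpha>) \<le> \<epsilon>}"

text \<open>The isoset I(S;alpha): the alpha-equivalence classes meeting the motif M
  (each given by its intersection with M), with weight k/m.\<close>
definition iso_classes :: "'a::euclidean_space set \<Rightarrow> 'a set \<Rightarrow> real \<Rightarrow> 'a set set" where
  "iso_classes S M \<alpha> = (\<lambda>p. {q \<in> M. alpha_equiv S \<alpha> p q}) ` M"

definition iso_weight :: "'a set \<Rightarrow> 'a set \<Rightarrow> real" where
  "iso_weight M K = real (card K) / real (card M)"

definition class_rep :: "'a set \<Rightarrow> 'a" where
  "class_rep K = (SOME p. p \<in> K)"

definition EMD_iso :: "'a::euclidean_space set \<Rightarrow> 'a set \<Rightarrow> 'a set \<Rightarrow> 'a set \<Rightarrow> real \<Rightarrow> real" where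
  "EMD_iso S MotS Q MotQ \<alpha> = Inf
     {(\<Sum>K\<in>iso_classes S MotS \<alpha>. \<Sum>L\<in>iso_classes Q MotQ \<alpha>.
          F K L * dC S (class_rep K) Q (class_rep L) \<alpha>) | F.
        (\<forall>K\<in>iso_classes S MotS \<alpha>. \<forall>L\<in>iso_classes Q MotQ \<alpha>. F K L \<in> {0..1}) \<and>
        (\<forall>K\<in>iso_classes S MotS \<alpha>. (\<Sum>L\<in>iso_classes Q MotQ \<alpha>. F K L) \<le> iso_weight MotS K) \<and>
        (\<forall>L\<in>iso_classes Q MotQ \<alpha>. (\<Sum>K\<in>iso_classes S MotS \<alpha>. F K L) \<le> iso_weight MotQ L) \<and>
        (\<Sum>K\<in>iso_classes S MotS \<alpha>. \<Sum>L\<in>iso_classes Q MotQ \<alpha>. F K L) = 1}"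

end

theory Submission
  imports Defs "HOL-Real_Asymp.Real_Asymp"
begin

text \<open>Let g be a bijection from S onto Q moving every point by at most \<delta>. Moving the
(\<alpha> - 2\<delta>)-cluster of p by g lands within 2\<delta> of the \<alpha>-cluster of g p, and
conversely, so dC(p, g p) \<le> 2\<delta>; moreover dC only depends on the \<alpha>-equivalence
classes of its arguments.

Count, over the points x = p + l of S with p in the motif and l a lattice vector of norm at
most R, the pairs (class of x, class of g x). Normalised, this is a partial transport plan of
cost at most 2\<delta> whose row sums are the weights of I(S;\<alpha>) scaled by N(R) / N(R + 2c),
where N counts lattice vectors in a ball and c bounds the motif radii and \<delta>; as g is
injective, its column sums stay below the weights of I(Q;\<alpha>). Since N grows polynomially,
some R makes this ratio arbitrarily close to 1, and completing the plan costs at most \<alpha>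
times the missing mass.\<close>

lemma span_full_basis:
  fixes B :: "'a::euclidean_space set"
  assumes "independent B" "card B = DIM('a)"
  shows "span B = UNIV"
proof -
  have "finite B" using assms(1) independent_explicit by blast
  then show ?thesis using card_eq_dim[of B UNIV] assms by (simp add: top.extremum_unique)
qed

lemma independent_coefficients_unique:
  fixes B :: "'a::euclidean_space set"
  assumes "independent B" "(\<Sum>w\<in>B. c w *\<^sub>R w) = (\<Sum>w\<in>B. d w *\<^sub>R w)" "v \<in> B"
  shows "c v = d v"
proof -
  have "(\<Sum>w\<in>B. (c w - d w) *\<^sub>R w) = 0"
    using assms(2) by (simp add: scaleR_diff_left sum_subtractf)
  moreover have "\<forall>c. (\<Sum>w\<in>B. c w *\<^sub>R w) = 0 \<longrightarrow> (\<forall>v\<in>B. c v = 0)"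
    using assms(1) unfolding independent_explicit by blast
  ultimately show ?thesis using assms(3) by fastforce
qed

lemma full_basis_coefficient_bound:
  fixes B :: "'a::euclidean_space set"
  assumes "independent B" "card B = DIM('a)"
  obtains K where "K > 0" "\<And>c v. v \<in> B \<Longrightarrow> \<bar>c v\<bar> \<le> K * norm (\<Sum>w\<in>B. c w *\<^sub>R w)"
proof -
  have finB: "finite B" and spanB: "span B = UNIV"
    using assms span_full_basis independent_explicit by auto
  have "\<exists>K>0. \<forall>x. \<bar>representation B x v\<bar> \<le> K * norm x" for v
    using bounded_linear.pos_bounded[OF bounded_linear_representation[OF assms(1) spanB, of v]]
    by (auto simp: mult.commute)
  then obtain Kv where Kv: "\<And>v. Kv v > 0" "\<And>v x. \<bar>representation B x v\<bar> \<le> Kv v * norm x"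
    by (metis (no_types))
  have coeff: "representation B (\<Sum>w\<in>B. c w *\<^sub>R w) v = c v" if "v \<in> B" for c v
  proof -
    let ?x = "\<Sum>w\<in>B. c w *\<^sub>R w"
    have "(\<Sum>w\<in>B. representation B ?x w *\<^sub>R w) = ?x"
      using real_vector.sum_representation_eq[OF assms(1), of ?x B] finB spanB by auto
    then show ?thesis using independent_coefficients_unique[OF assms(1)] that by metis
  qed
  show thesis
  proof (rule that)
    have "B \<noteq> {}" using assms(2) DIM_positive by (metis card.empty less_irrefl)
    then show "(\<Sum>v\<in>B. Kv v) > 0" using finB Kv(1) by (simp add: sum_pos)
    fix c v assume "v \<in> B"
    then have "\<bar>c v\<bar> \<le> Kv v * norm (\<Sum>w\<in>B. c w *\<^sub>R w)"
      using Kv(2)[of "\<Sum>w\<in>B. c w *\<^sub>R w" v] coeff by simp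
    also have "\<dots> \<le> (\<Sum>v\<in>B. Kv v) * norm (\<Sum>w\<in>B. c w *\<^sub>R w)"
    proof (rule mult_right_mono)
      show "Kv v \<le> (\<Sum>v\<in>B. Kv v)"
        using \<open>v \<in> B\<close> finB Kv(1) by (metis member_le_sum less_imp_le)
    qed simp
    finally show "\<bar>c v\<bar> \<le> (\<Sum>v\<in>B. Kv v) * norm (\<Sum>w\<in>B. c w *\<^sub>R w)" .
  qed
qed

lemma lattice_memI: "(\<And>v. v \<in> B \<Longrightarrow> c v \<in> \<int>) \<Longrightarrow> (\<Sum>v\<in>B. c v *\<^sub>R v) \<in> lattice B"
  unfolding lattice_def by blast

lemma lattice_add:
  assumes "x \<in> lattice B" "y \<in> lattice B" shows "x + y \<in> lattice B"
proof -
  obtain c d where "x = (\<Sum>v\<in>B. c v *\<^sub>R v)" "\<forall>v\<in>B. c v \<in> \<int>"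
    and "y = (\<Sum>v\<in>B. d v *\<^sub>R v)" "\<forall>v\<in>B. d v \<in> \<int>"
    using assms unfolding lattice_def by blast
  then show ?thesis
    using lattice_memI[of B "\<lambda>v. c v + d v"] by (simp add: scaleR_add_left sum.distrib)
qed

lemma lattice_uminus:
  assumes "x \<in> lattice B" shows "- x \<in> lattice B"
proof -
  obtain c where "x = (\<Sum>v\<in>B. c v *\<^sub>R v)" "\<forall>v\<in>B. c v \<in> \<int>"
    using assms unfolding lattice_def by blast
  then show ?thesis using lattice_memI[of B "\<lambda>v. - c v"] by (simp add: sum_negf)
qed

lemma lattice_diff: "x \<in> lattice B \<Longrightarrow> y \<in> lattice B \<Longrightarrow> x - y \<in> lattice B"
  using lattice_add[of x B "- y"] lattice_uminus by auto

lemma zero_in_lattice: "0 \<in> lattice B"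
  using lattice_memI[of B "\<lambda>v. 0"] by simp

lemma unit_cell_lattice_decomposition_unique:
  fixes B :: "'a::euclidean_space set"
  assumes "independent B" "p \<in> unit_cell B" "p' \<in> unit_cell B" "l \<in> lattice B" "l' \<in> lattice B"
    and "p + l = p' + l'"
  shows "p = p'"
proof -
  obtain a a' c c' where
    a: "p = (\<Sum>v\<in>B. a v *\<^sub>R v)" "\<forall>v\<in>B. a v \<in> {0..<1}" and
    a': "p' = (\<Sum>v\<in>B. a' v *\<^sub>R v)" "\<forall>v\<in>B. a' v \<in> {0..<1}" and
    c: "l = (\<Sum>v\<in>B. c v *\<^sub>R v)" "\<forall>v\<in>B. c v \<in> \<int>" and
    c': "l' = (\<Sum>v\<in>B. c' v *\<^sub>R v)" "\<forall>v\<in>B. c' v \<in> \<int>"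
    using assms(2-5) unfolding unit_cell_def lattice_def by blast
  have "a v = a' v" if "v \<in> B" for v
  proof -
    have "(\<Sum>v\<in>B. (a v + c v) *\<^sub>R v) = (\<Sum>v\<in>B. (a' v + c' v) *\<^sub>R v)"
      using assms(6) a c a' c' by (simp add: scaleR_add_left sum.distrib)
    then have "a v + c v = a' v + c' v"
      by (rule independent_coefficients_unique[OF assms(1) _ that])
    then have coeff: "a v - a' v = c' v - c v" by simp
    have "c' v - c v \<in> \<int>" using c(2) c'(2) that by simp
    then obtain z where z: "c' v - c v = of_int z" by (auto elim: Ints_cases)
    have "a v \<in> {0..<1}" "a' v \<in> {0..<1}" using a(2) a'(2) that by auto
    then have "\<bar>real_of_int z\<bar> < 1" using coeff z by auto
    then have "z = 0" by linarith
    then show ?thesis using coeff z by simp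
  qed
  then show ?thesis unfolding a(1) a'(1) by (intro sum.cong) auto
qed

definition lattice_count :: "'a::euclidean_space set \<Rightarrow> real \<Rightarrow> nat" where
  "lattice_count B R = card (lattice B \<inter> cball 0 R)"

lemma lattice_cball_integer_coefficients:
  fixes B :: "'a::euclidean_space set"
  assumes "independent B" "card B = DIM('a)"
  obtains K where "K > 0" "\<And>R. lattice B \<inter> cball 0 R \<subseteq>
    (\<lambda>c. \<Sum>v\<in>B. c v *\<^sub>R v) ` (B \<rightarrow>\<^sub>E real_of_int ` {-\<lfloor>K * R\<rfloor>..\<lfloor>K * R\<rfloor>})"
proof -
  obtain K where K: "K > 0" "\<And>c v. v \<in> B \<Longrightarrow> \<bar>c v\<bar> \<le> K * norm (\<Sum>w\<in>B. c w *\<^sub>R w)"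
    using full_basis_coefficient_bound[OF assms] by blast
  have "x \<in> (\<lambda>c. \<Sum>v\<in>B. c v *\<^sub>R v) ` (B \<rightarrow>\<^sub>E real_of_int ` {-\<lfloor>K * R\<rfloor>..\<lfloor>K * R\<rfloor>})"
    if x: "x \<in> lattice B \<inter> cball 0 R" for x R
  proof -
    obtain c where c: "x = (\<Sum>v\<in>B. c v *\<^sub>R v)" "\<forall>v\<in>B. c v \<in> \<int>"
      using x unfolding lattice_def by blast
    have "c v \<in> real_of_int ` {-\<lfloor>K * R\<rfloor>..\<lfloor>K * R\<rfloor>}" if "v \<in> B" for v
    proof -
      obtain z where z: "c v = of_int z" using c(2) \<open>v \<in> B\<close> Ints_cases by metis
      have "norm x \<le> R" using x by simp
      then have "\<bar>c v\<bar> \<le> K * R"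
        using K(2)[OF \<open>v \<in> B\<close>, of c] c(1) K(1) by (metis mult_left_mono order_trans less_imp_le)
      then have "of_int z \<le> K * R" "of_int (- z) \<le> K * R" using z by auto
      then have "z \<in> {-\<lfloor>K * R\<rfloor>..\<lfloor>K * R\<rfloor>}" unfolding le_floor_iff[symmetric] by simp
      then show ?thesis using z by blast
    qed
    then have "restrict c B \<in> B \<rightarrow>\<^sub>E real_of_int ` {-\<lfloor>K * R\<rfloor>..\<lfloor>K * R\<rfloor>}" by auto
    moreover have "x = (\<Sum>v\<in>B. restrict c B v *\<^sub>R v)" using c(1) by simp
    ultimately show ?thesis by blast
  qed
  then show thesis using that K(1) by blast
qed

lemma finite_lattice_cball:
  fixes B :: "'a::euclidean_space set"
  assumes "independent B" "card B = DIM('a)"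
  shows "finite (lattice B \<inter> cball 0 R)"
proof -
  obtain K where "K > 0" and K: "\<And>R. lattice B \<inter> cball 0 R \<subseteq>
      (\<lambda>c. \<Sum>v\<in>B. c v *\<^sub>R v) ` (B \<rightarrow>\<^sub>E real_of_int ` {-\<lfloor>K * R\<rfloor>..\<lfloor>K * R\<rfloor>})"
    using lattice_cball_integer_coefficients[OF assms] by blast
  have "finite B" using assms(1) independent_explicit by blast
  then have "finite (B \<rightarrow>\<^sub>E real_of_int ` {-\<lfloor>K * R\<rfloor>..\<lfloor>K * R\<rfloor>})"
    by (simp add: finite_PiE)
  then have "finite ((\<lambda>c. \<Sum>v\<in>B. c v *\<^sub>R v) ` (B \<rightarrow>\<^sub>E real_of_int ` {-\<lfloor>K * R\<rfloor>..\<lfloor>K * R\<rfloor>}))"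
    by (rule finite_imageI)
  with K[of R] show ?thesis by (rule finite_subset)
qed

lemma lattice_count_polynomial_bound:
  fixes B :: "'a::euclidean_space set"
  assumes "independent B" "card B = DIM('a)"
  obtains C where "C > 0" "\<And>R. R \<ge> 0 \<Longrightarrow> real (lattice_count B R) \<le> (C * R + 1) ^ DIM('a)"
proof -
  obtain K where K: "K > 0" "\<And>R. lattice B \<inter> cball 0 R \<subseteq>
      (\<lambda>c. \<Sum>v\<in>B. c v *\<^sub>R v) ` (B \<rightarrow>\<^sub>E real_of_int ` {-\<lfloor>K * R\<rfloor>..\<lfloor>K * R\<rfloor>})"
    using lattice_cball_integer_coefficients[OF assms] by blast
  have finB: "finite B" using assms(1) independent_explicit by blast
  have bound: "real (lattice_count B R) \<le> (2 * K * R + 1) ^ DIM('a)" if "R \<ge> 0" for R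
  proof -
    let ?M = "\<lfloor>K * R\<rfloor>"
    have fin: "finite (B \<rightarrow>\<^sub>E real_of_int ` {-?M..?M})" using finB by (simp add: finite_PiE)
    have "lattice_count B R \<le> card ((\<lambda>c. \<Sum>v\<in>B. c v *\<^sub>R v) ` (B \<rightarrow>\<^sub>E real_of_int ` {-?M..?M}))"
      unfolding lattice_count_def using fin K(2) by (intro card_mono) auto
    also have "\<dots> \<le> card (B \<rightarrow>\<^sub>E real_of_int ` {-?M..?M})" using fin by (rule card_image_le)
    also have "\<dots> = card (real_of_int ` {-?M..?M}) ^ card B"
      using finB by (simp add: card_PiE prod_constant)
    also have "\<dots> = nat (2 * ?M + 1) ^ DIM('a)"
      using assms(2) by (simp add: card_image inj_on_def)
    finally have "real (lattice_count B R) \<le> real (nat (2 * ?M + 1)) ^ DIM('a)"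
      by (metis of_nat_le_iff of_nat_power)
    also have "\<dots> \<le> (2 * K * R + 1) ^ DIM('a)"
    proof (rule power_mono)
      have "0 \<le> ?M" using K(1) that by simp
      then show "real (nat (2 * ?M + 1)) \<le> 2 * K * R + 1" by simp
    qed simp
    finally show ?thesis .
  qed
  show thesis
    by (rule that[of "2 * K"]) (use K(1) bound in auto)
qed

lemma polynomial_growth_thin_shell:
  fixes f :: "real \<Rightarrow> real" and C c \<eta> :: real and d :: nat
  assumes mono: "\<And>r s. r \<le> s \<Longrightarrow> f r \<le> f s" and pos: "f 0 > 0"
    and poly: "\<And>R. R \<ge> 0 \<Longrightarrow> f R \<le> (C * R + 1) ^ d"
    and "C \<ge> 0" "c \<ge> 0" "\<eta> > 0"
  shows "\<exists>R\<ge>0. (1 - \<eta>) * f (R + c) \<le> f R"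
proof (rule ccontr)
  assume "\<not> ?thesis"
  then have grow: "f R < (1 - \<eta>) * f (R + c)" if "R \<ge> 0" for R
    using that by force
  have "\<eta> < 1"
  proof (rule ccontr)
    assume "\<not> \<eta> < 1"
    then have "(1 - \<eta>) * f (0 + c) \<le> 0"
      using mono[of 0 c] pos \<open>c \<ge> 0\<close> by (simp add: mult_nonpos_nonneg)
    then show False using grow[of 0] pos by simp
  qed
  define q where "q = 1 / (1 - \<eta>)"
  have "q > 1" unfolding q_def using \<open>\<eta> > 0\<close> \<open>\<eta> < 1\<close> by simp
  have geometric: "q ^ k * f 0 \<le> f (real k * c)" for k
  proof (induction k)
    case (Suc k)
    have "q ^ Suc k * f 0 \<le> q * f (real k * c)" using Suc \<open>q > 1\<close> by simp
    also have "\<dots> \<le> f (real k * c + c)"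
      using grow[of "real k * c"] \<open>c \<ge> 0\<close> \<open>\<eta> < 1\<close> unfolding q_def by (simp add: field_simps)
    finally show ?case by (simp add: algebra_simps)
  qed simp
  define A where "A = C * c + 1"
  have "A > 0" unfolding A_def using mult_nonneg_nonneg[OF \<open>C \<ge> 0\<close> \<open>c \<ge> 0\<close>] by linarith
  have "(\<lambda>k. (A * (real k + 1)) ^ d / q ^ k) \<longlonglongrightarrow> 0"
    using \<open>q > 1\<close> \<open>A > 0\<close> by real_asymp
  then have "\<forall>\<^sub>F k in sequentially. (A * (real k + 1)) ^ d / q ^ k < f 0"
    using pos by (rule order_tendstoD(2))
  then obtain k where k: "(A * (real k + 1)) ^ d / q ^ k < f 0"
    using eventually_happens'[OF sequentially_bot] by blast
  have "q ^ k * f 0 \<le> (C * (real k * c) + 1) ^ d"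
    using geometric[of k] poly[of "real k * c"] \<open>c \<ge> 0\<close> by simp
  also have "\<dots> \<le> (A * (real k + 1)) ^ d"
    unfolding A_def using \<open>C \<ge> 0\<close> \<open>c \<ge> 0\<close>
    by (intro power_mono) (auto simp: algebra_simps intro: mult_nonneg_nonneg)
  finally show False using k \<open>q > 1\<close> by (simp add: field_simps)
qed

lemma dH_le:
  fixes C D :: "'a::euclidean_space set"
  assumes "finite C" "C \<noteq> {}" "finite D" "D \<noteq> {}"
    and "\<And>x. x \<in> C \<Longrightarrow> \<exists>y\<in>D. dist x y \<le> e"
  shows "dH C D \<le> e"
  unfolding dH_def
proof (subst Max_le_iff, goal_cases)
  case 3
  show ?case
  proof
    fix a assume "a \<in> (\<lambda>p. Min ((\<lambda>q. dist p q) ` D)) ` C"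
    then obtain x where x: "x \<in> C" "a = Min ((\<lambda>q. dist x q) ` D)" by blast
    obtain y where "y \<in> D" "dist x y \<le> e" using assms(5)[OF x(1)] by blast
    moreover have "Min ((\<lambda>q. dist x q) ` D) \<le> dist x y"
      using \<open>y \<in> D\<close> assms(3) by (intro Min_le) auto
    ultimately show "a \<le> e" using x by linarith
  qed
qed (use assms in auto)

lemma dH_nonneg:
  fixes C D :: "'a::euclidean_space set"
  assumes "finite C" "C \<noteq> {}" "finite D" "D \<noteq> {}"
  shows "dH C D \<ge> 0"
proof -
  obtain x where "x \<in> C" using assms(2) by blast
  have "0 \<le> Min ((\<lambda>q. dist x q) ` D)" using assms(3,4) by (subst Min_ge_iff) auto
  also have "\<dots> \<le> dH C D" unfolding dH_def using assms(1) \<open>x \<in> C\<close> by (intro Max_ge) auto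
  finally show ?thesis .
qed

lemma dR_le:
  fixes C D :: "'a::euclidean_space set"
  assumes "finite C" "C \<noteq> {}" "finite D" "D \<noteq> {}"
    and "\<And>x. x \<in> C \<Longrightarrow> \<exists>y\<in>D. dist x y \<le> e"
  shows "dR C D \<le> e"
proof -
  have "bdd_below ((\<lambda>f. dH (f ` C) D) ` {f. orthogonal_transformation f})"
    using dH_nonneg[of "_ ` C" D] assms(1-4) by (intro bdd_belowI[of _ 0]) auto
  then have "dR C D \<le> dH ((\<lambda>x. x) ` C) D"
    unfolding dR_def by (rule cINF_lower) simp
  also have "\<dots> \<le> e" using assms by (intro dH_le) auto
  finally show ?thesis .
qed

lemma orthogonal_transformation_inv_apply:
  fixes T :: "'a::euclidean_space \<Rightarrow> 'a"
  assumes "orthogonal_transformation T"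
  shows "inv T (T x) = x" "T (inv T x) = x"
  using orthogonal_transformation_bij[OF assms] by (auto simp: bij_def inv_f_f surj_f_inv_f)

abbreviation orthogonal_group :: "('a::euclidean_space \<Rightarrow> 'a) set" where
  "orthogonal_group \<equiv> {f. orthogonal_transformation f}"

lemma orthogonal_group_compose_left:
  fixes T :: "'a::euclidean_space \<Rightarrow> 'a"
  assumes "orthogonal_transformation T"
  shows "(\<lambda>f. T \<circ> f) ` orthogonal_group = orthogonal_group"
proof
  show "(\<lambda>f. T \<circ> f) ` orthogonal_group \<subseteq> orthogonal_group"
    using assms orthogonal_transformation_compose by auto
  show "orthogonal_group \<subseteq> (\<lambda>f. T \<circ> f) ` orthogonal_group"
  proof
    fix h :: "'a \<Rightarrow> 'a" assume "h \<in> orthogonal_group"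
    then have "inv T \<circ> h \<in> orthogonal_group"
      using orthogonal_transformation_inv[OF assms] orthogonal_transformation_compose by auto
    moreover have "h = T \<circ> (inv T \<circ> h)"
      using orthogonal_transformation_inv_apply[OF assms] by (auto simp: fun_eq_iff)
    ultimately show "h \<in> (\<lambda>f. T \<circ> f) ` orthogonal_group" by blast
  qed
qed

lemma orthogonal_group_compose_right:
  fixes T :: "'a::euclidean_space \<Rightarrow> 'a"
  assumes "orthogonal_transformation T"
  shows "(\<lambda>f. f \<circ> T) ` orthogonal_group = orthogonal_group"
proof
  show "(\<lambda>f. f \<circ> T) ` orthogonal_group \<subseteq> orthogonal_group"
    using assms orthogonal_transformation_compose by auto
  show "orthogonal_group \<subseteq> (\<lambda>f. f \<circ> T) ` orthogonal_group"
  proof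
    fix h :: "'a \<Rightarrow> 'a" assume "h \<in> orthogonal_group"
    then have "h \<circ> inv T \<in> orthogonal_group"
      using orthogonal_transformation_inv[OF assms] orthogonal_transformation_compose by auto
    moreover have "h = (h \<circ> inv T) \<circ> T"
      using orthogonal_transformation_inv_apply[OF assms] by (auto simp: fun_eq_iff)
    ultimately show "h \<in> (\<lambda>f. f \<circ> T) ` orthogonal_group" by blast
  qed
qed

lemma dH_image_orthogonal_right:
  fixes C D :: "'a::euclidean_space set"
  assumes "orthogonal_transformation T"
  shows "dH C (T ` D) = dH (inv T ` C) D"
proof -
  have "dist p (T q) = dist (inv T p) q" for p q
    using assms orthogonal_transformation_inv_apply[OF assms]
    unfolding orthogonal_transformation_isometry by metis
  then show ?thesis unfolding dH_def by (simp add: image_image)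
qed

lemma dR_image_orthogonal_left:
  fixes C D :: "'a::euclidean_space set"
  assumes "orthogonal_transformation T"
  shows "dR (T ` C) D = dR C D"
proof -
  have "dR (T ` C) D = (INF f\<in>(\<lambda>f. f \<circ> T) ` orthogonal_group. dH (f ` C) D)"
    unfolding dR_def by (simp add: image_comp)
  then show ?thesis unfolding orthogonal_group_compose_right[OF assms] dR_def .
qed

lemma dR_image_orthogonal_right:
  fixes C D :: "'a::euclidean_space set"
  assumes "orthogonal_transformation T"
  shows "dR C (T ` D) = dR C D"
proof -
  have "dR C (T ` D) = (INF f\<in>(\<lambda>f. inv T \<circ> f) ` orthogonal_group. dH (f ` C) D)"
    unfolding dR_def dH_image_orthogonal_right[OF assms] by (simp add: image_comp)
  then show ?thesis
    unfolding orthogonal_group_compose_left[OF orthogonal_transformation_inv[OF assms]] dR_def .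
qed

lemma isometry_affine:
  fixes f :: "'a::euclidean_space \<Rightarrow> 'a"
  assumes "isometry f"
  obtains T where "orthogonal_transformation T" "\<forall>x. f x - f a = T (x - a)"
proof
  show "orthogonal_transformation (\<lambda>x. f (x + a) - f a)"
    using assms unfolding orthogonal_transformation_isometry isometry_def by (simp add: dist_norm)
qed simp

lemma isometry_bij:
  fixes f :: "'a::euclidean_space \<Rightarrow> 'a"
  assumes "isometry f"
  shows "bij f"
proof -
  obtain T where T: "orthogonal_transformation T" "\<forall>x. f x - f 0 = T x"
    using isometry_affine[OF assms, of 0] by auto
  have "f = (\<lambda>y. f 0 + y) \<circ> T"
  proof
    fix x show "f x = ((\<lambda>y. f 0 + y) \<circ> T) x"
      using T(2) by (metis comp_apply add.commute diff_add_cancel)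
  qed
  moreover have "bij (\<lambda>y. f 0 + y :: 'a)" by (rule bij_betwI[where g="\<lambda>y. y - f 0"]) auto
  ultimately show ?thesis using bij_comp orthogonal_transformation_bij[OF T(1)] by metis
qed

lemma isometry_inv:
  fixes f :: "'a::euclidean_space \<Rightarrow> 'a"
  assumes "isometry f"
  shows "isometry (inv f)"
  unfolding isometry_def
proof (intro allI)
  fix x y
  have "surj f" using isometry_bij[OF assms] by (rule bij_is_surj)
  then show "dist (inv f x) (inv f y) = dist x y"
    using assms unfolding isometry_def by (metis surj_f_inv_f)
qed

lemma alpha_equiv_refl: "alpha_equiv S \<alpha> p p"
  unfolding alpha_equiv_def isometry_def by (intro exI[of _ id]) auto

lemma alpha_equiv_sym:
  fixes S :: "'a::euclidean_space set"
  assumes "alpha_equiv S \<alpha> p q"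
  shows "alpha_equiv S \<alpha> q p"
proof -
  obtain f where f: "isometry f" "f ` cluster S p \<alpha> = cluster S q \<alpha>" "f p = q"
    using assms unfolding alpha_equiv_def by blast
  have "inj f" using isometry_bij[OF f(1)] by (rule bij_is_inj)
  then have "inv f ` cluster S q \<alpha> = cluster S p \<alpha>" "inv f q = p"
    using f(2,3) by (metis image_inv_f_f, metis inv_f_f)
  then show ?thesis unfolding alpha_equiv_def using isometry_inv[OF f(1)] by blast
qed

lemma alpha_equiv_trans:
  fixes S :: "'a::euclidean_space set"
  assumes "alpha_equiv S \<alpha> p q" "alpha_equiv S \<alpha> q r"
  shows "alpha_equiv S \<alpha> p r"
proof -
  obtain f where f: "isometry f" "f ` cluster S p \<alpha> = cluster S q \<alpha>" "f p = q"
    using assms(1) unfolding alpha_equiv_def by blast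
  obtain g where g: "isometry g" "g ` cluster S q \<alpha> = cluster S r \<alpha>" "g q = r"
    using assms(2) unfolding alpha_equiv_def by blast
  have "isometry (g \<circ> f)" using f(1) g(1) unfolding isometry_def by simp
  moreover have "(g \<circ> f) ` cluster S p \<alpha> = cluster S r \<alpha>" using f(2) g(2) by (metis image_comp)
  ultimately show ?thesis unfolding alpha_equiv_def using f(3) g(3) by force
qed

lemma isometry_image_cluster_smaller:
  fixes S :: "'a::euclidean_space set"
  assumes "isometry f" "f ` cluster S p \<alpha> = cluster S q \<alpha>" "f p = q" "r \<le> \<alpha>"
  shows "f ` cluster S p r = cluster S q r"
proof -
  have dist_eq: "dist q (f x) = dist p x" for x
    using assms(1,3) unfolding isometry_def by metis
  have mem_p: "x \<in> cluster S p r \<longleftrightarrow> x \<in> cluster S p \<alpha> \<and> dist p x \<le> r" for x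
    using assms(4) unfolding cluster_def by auto
  have mem_q: "y \<in> cluster S q r \<longleftrightarrow> y \<in> cluster S q \<alpha> \<and> dist q y \<le> r" for y
    using assms(4) unfolding cluster_def by auto
  show ?thesis
  proof (intro equalityI subsetI)
    fix y assume "y \<in> f ` cluster S p r"
    then obtain x where x: "x \<in> cluster S p r" "y = f x" by blast
    then have "x \<in> cluster S p \<alpha>" "dist p x \<le> r" using mem_p by auto
    then show "y \<in> cluster S q r" using mem_q assms(2) dist_eq x(2) by auto
  next
    fix y assume "y \<in> cluster S q r"
    then have "y \<in> f ` cluster S p \<alpha>" "dist q y \<le> r" using mem_q assms(2) by auto
    then obtain x where x: "x \<in> cluster S p \<alpha>" "y = f x" by blast
    then have "x \<in> cluster S p r" using mem_p dist_eq \<open>dist q y \<le> r\<close> by auto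
    then show "y \<in> f ` cluster S p r" using x(2) by blast
  qed
qed

abbreviation centred_cluster :: "'a::euclidean_space set \<Rightarrow> 'a \<Rightarrow> real \<Rightarrow> 'a set" where
  "centred_cluster S p r \<equiv> (\<lambda>x. x - p) ` cluster S p r"

lemma alpha_equiv_centred_clusters:
  fixes S :: "'a::euclidean_space set"
  assumes "alpha_equiv S \<alpha> p p'"
  obtains T where "orthogonal_transformation T"
    "\<forall>r\<le>\<alpha>. centred_cluster S p' r = T ` centred_cluster S p r"
proof -
  obtain f where f: "isometry f" "f ` cluster S p \<alpha> = cluster S p' \<alpha>" "f p = p'"
    using assms unfolding alpha_equiv_def by blast
  obtain T where T: "orthogonal_transformation T" "\<forall>x. f x - f p = T (x - p)"
    using isometry_affine[OF f(1)] by blast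
  have "centred_cluster S p' r = T ` centred_cluster S p r" if "r \<le> \<alpha>" for r
  proof -
    have "centred_cluster S p' r = (\<lambda>x. f x - p') ` cluster S p r"
      unfolding isometry_image_cluster_smaller[OF f that, symmetric] by (simp add: image_image)
    also have "\<dots> = T ` centred_cluster S p r"
      using T(2) f(3) by (simp add: image_image)
    finally show ?thesis .
  qed
  with T(1) show thesis using that by blast
qed

lemma dC_sym: "dC S p Q q \<alpha> = dC Q q S p \<alpha>"
  unfolding dC_def by (simp add: conj_commute)

lemma dC_alpha_equiv_left:
  fixes S Q :: "'a::euclidean_space set"
  assumes "alpha_equiv S \<alpha> p p'"
  shows "dC S p Q q \<alpha> = dC S p' Q q \<alpha>"
proof -
  obtain T where T: "orthogonal_transformation T"
    "\<forall>r\<le>\<alpha>. centred_cluster S p' r = T ` centred_cluster S p r"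
    using alpha_equiv_centred_clusters[OF assms] by blast
  have "dR (centred_cluster S p (\<alpha> - \<epsilon>)) D = dR (centred_cluster S p' (\<alpha> - \<epsilon>)) D"
    "dR E (centred_cluster S p \<alpha>) = dR E (centred_cluster S p' \<alpha>)"
    if "\<epsilon> \<in> {0..\<alpha>}" for \<epsilon> D E
    using that T by (simp_all add: dR_image_orthogonal_left dR_image_orthogonal_right)
  then show ?thesis unfolding dC_def by (intro arg_cong[where f=Inf] Collect_cong) auto
qed

lemma dC_alpha_equiv_right:
  fixes S Q :: "'a::euclidean_space set"
  assumes "alpha_equiv Q \<alpha> q q'"
  shows "dC S p Q q \<alpha> = dC S p Q q' \<alpha>"
  using dC_alpha_equiv_left[OF assms, of S p] by (simp add: dC_sym)

definition locally_finite :: "'a::euclidean_space set \<Rightarrow> bool" where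
  "locally_finite S \<longleftrightarrow> (\<forall>c r. finite (S \<inter> cball c r))"

lemma centred_cluster_finite_nonempty:
  fixes S :: "'a::euclidean_space set"
  assumes "locally_finite S" "p \<in> S" "r \<ge> 0"
  shows "finite (centred_cluster S p r)" "centred_cluster S p r \<noteq> {}"
  using assms unfolding locally_finite_def cluster_def by auto

lemma dC_le:
  fixes S Q :: "'a::euclidean_space set"
  assumes "\<epsilon> \<in> {0..\<alpha>}"
    and "dR (centred_cluster S p (\<alpha> - \<epsilon>)) (centred_cluster Q q \<alpha>) \<le> \<epsilon>"
    and "dR (centred_cluster Q q (\<alpha> - \<epsilon>)) (centred_cluster S p \<alpha>) \<le> \<epsilon>"
  shows "dC S p Q q \<alpha> \<le> \<epsilon>"
  unfolding dC_def by (rule cInf_lower) (use assms in auto)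

lemma dR_singleton_zero_le:
  fixes S :: "'a::euclidean_space set"
  assumes "locally_finite S" "p \<in> S" "\<alpha> \<ge> 0"
  shows "dR {0} (centred_cluster S p \<alpha>) \<le> 0"
proof (rule dR_le)
  show "\<exists>y\<in>centred_cluster S p \<alpha>. dist x y \<le> 0" if "x \<in> {0}" for x
    using that assms(2,3) unfolding cluster_def by force
qed (use centred_cluster_finite_nonempty[OF assms] in auto)

lemma dC_bounds:
  fixes S Q :: "'a::euclidean_space set"
  assumes "locally_finite S" "locally_finite Q" "p \<in> S" "q \<in> Q" "\<alpha> \<ge> 0"
  shows "dC S p Q q \<alpha> \<le> \<alpha>" "0 \<le> dC S p Q q \<alpha>"
proof -
  define E where "E = {\<epsilon> \<in> {0..\<alpha>}.
      dR (centred_cluster S p (\<alpha> - \<epsilon>)) (centred_cluster Q q \<alpha>) \<le> \<epsilon> \<and>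
      dR (centred_cluster Q q (\<alpha> - \<epsilon>)) (centred_cluster S p \<alpha>) \<le> \<epsilon>}"
  have "cluster S p 0 = {p}" "cluster Q q 0 = {q}"
    using assms(3,4) unfolding cluster_def by auto
  then have "\<alpha> \<in> E" unfolding E_def
    using dR_singleton_zero_le[OF assms(2,4,5)] dR_singleton_zero_le[OF assms(1,3,5)] assms(5)
    by auto
  then show "dC S p Q q \<alpha> \<le> \<alpha>" "0 \<le> dC S p Q q \<alpha>"
    unfolding dC_def E_def[symmetric] by (auto intro!: cInf_lower cInf_greatest simp: E_def)
qed

lemma centred_cluster_displacement:
  fixes S Q :: "'a::euclidean_space set"
  assumes "bij_betw g S Q" "\<And>x. x \<in> S \<Longrightarrow> dist x (g x) \<le> \<delta>" "p \<in> S"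
    and "x \<in> centred_cluster S p (\<alpha> - 2 * \<delta>)"
  shows "\<exists>y\<in>centred_cluster Q (g p) \<alpha>. dist x y \<le> 2 * \<delta>"
proof -
  obtain s where s: "s \<in> S" "dist p s \<le> \<alpha> - 2 * \<delta>" "x = s - p"
    using assms(4) unfolding cluster_def by auto
  have "dist (g p) (g s) \<le> dist (g p) p + dist p s + dist s (g s)"
    using dist_triangle[of "g p" "g s" p] dist_triangle[of p "g s" s] by linarith
  also have "\<dots> \<le> \<alpha>" using assms(2)[OF assms(3)] assms(2)[OF s(1)] s(2) by (simp add: dist_commute)
  finally have "g s - g p \<in> centred_cluster Q (g p) \<alpha>"
    using bij_betwE[OF assms(1)] s(1) unfolding cluster_def by auto
  have "dist x (g s - g p) = norm ((s - g s) - (p - g p))"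
    unfolding s(3) dist_norm by (simp add: algebra_simps)
  also have "\<dots> \<le> dist s (g s) + dist p (g p)"
    unfolding dist_norm by (rule norm_triangle_ineq4)
  also have "\<dots> \<le> 2 * \<delta>" using assms(2)[OF s(1)] assms(2)[OF assms(3)] by simp
  finally show ?thesis using \<open>g s - g p \<in> centred_cluster Q (g p) \<alpha>\<close> by blast
qed

lemma dC_le_twice_displacement:
  fixes S Q :: "'a::euclidean_space set"
  assumes "locally_finite S" "locally_finite Q" "bij_betw g S Q"
    and "\<And>x. x \<in> S \<Longrightarrow> dist x (g x) \<le> \<delta>" "p \<in> S" "\<alpha> \<ge> 0"
  shows "dC S p Q (g p) \<alpha> \<le> 2 * \<delta>"
proof (cases "2 * \<delta> \<le> \<alpha>")
  case False
  then show ?thesis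
    using dC_bounds(1)[OF assms(1,2,5) bij_betw_apply[OF assms(3,5)] assms(6)] by linarith
next
  case True
  let ?h = "inv_into S g"
  have gp: "g p \<in> Q" and hgp: "?h (g p) = p"
    using assms(3,5) by (auto simp: bij_betw_def)
  have h: "bij_betw ?h Q S" using assms(3) by (rule bij_betw_inv_into)
  have h_displacement: "dist y (?h y) \<le> \<delta>" if "y \<in> Q" for y
    using assms(4)[of "?h y"] that assms(3) bij_betw_inv_into_right[OF assms(3) that]
      bij_betwE[OF h] by (simp add: dist_commute)
  have "0 \<le> \<delta>" using assms(4,5) zero_le_dist order_trans by blast
  show ?thesis
  proof (rule dC_le)
    show "2 * \<delta> \<in> {0..\<alpha>}" using True \<open>0 \<le> \<delta>\<close> by simp
    show "dR (centred_cluster S p (\<alpha> - 2 * \<delta>)) (centred_cluster Q (g p) \<alpha>) \<le> 2 * \<delta>"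
      using centred_cluster_displacement[OF assms(3,4,5)] True assms(6)
        centred_cluster_finite_nonempty[OF assms(1,5)] centred_cluster_finite_nonempty[OF assms(2) gp]
      by (intro dR_le) auto
    show "dR (centred_cluster Q (g p) (\<alpha> - 2 * \<delta>)) (centred_cluster S p \<alpha>) \<le> 2 * \<delta>"
      using centred_cluster_displacement[OF h h_displacement gp] hgp True assms(6)
        centred_cluster_finite_nonempty[OF assms(1,5)] centred_cluster_finite_nonempty[OF assms(2) gp]
      by (intro dR_le) auto
  qed
qed

definition motif_class :: "'a::euclidean_space set \<Rightarrow> 'a set \<Rightarrow> real \<Rightarrow> 'a \<Rightarrow> 'a set" where
  "motif_class S M \<alpha> x = {p \<in> M. alpha_equiv S \<alpha> x p}"

lemma iso_classes_eq: "iso_classes S M \<alpha> = motif_class S M \<alpha> ` M"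
  unfolding iso_classes_def motif_class_def ..

lemma motif_class_alpha_equiv:
  fixes S :: "'a::euclidean_space set"
  assumes "alpha_equiv S \<alpha> x y"
  shows "motif_class S M \<alpha> x = motif_class S M \<alpha> y"
  using assms alpha_equiv_sym alpha_equiv_trans unfolding motif_class_def by blast

lemma mem_iso_class_iff:
  fixes S :: "'a::euclidean_space set"
  assumes "p \<in> M" "K \<in> iso_classes S M \<alpha>"
  shows "p \<in> K \<longleftrightarrow> motif_class S M \<alpha> p = K"
proof -
  obtain p0 where "p0 \<in> M" "K = motif_class S M \<alpha> p0"
    using assms(2) unfolding iso_classes_eq by blast
  then show ?thesis
    using assms(1) motif_class_alpha_equiv[of S \<alpha> p0 p M] alpha_equiv_refl[of S \<alpha> p]
    unfolding motif_class_def by blast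
qed

lemma iso_class_subset: "K \<in> iso_classes S M \<alpha> \<Longrightarrow> K \<subseteq> M"
  unfolding iso_classes_def by auto

lemma finite_iso_classes: "finite M \<Longrightarrow> finite (iso_classes S M \<alpha>)"
  unfolding iso_classes_eq by simp

lemma class_rep_mem:
  fixes S :: "'a::euclidean_space set"
  assumes "K \<in> iso_classes S M \<alpha>"
  shows "class_rep K \<in> K"
proof -
  obtain p where "p \<in> M" "K = motif_class S M \<alpha> p"
    using assms unfolding iso_classes_eq by blast
  then have "p \<in> K" using alpha_equiv_refl unfolding motif_class_def by blast
  then show ?thesis unfolding class_rep_def by (rule someI)
qed

lemma sum_iso_weight:
  fixes S :: "'a::euclidean_space set"
  assumes "finite M" "M \<noteq> {}"
  shows "(\<Sum>K\<in>iso_classes S M \<alpha>. iso_weight M K) = 1"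
proof -
  have "p \<in> motif_class S M \<alpha> p" if "p \<in> M" for p
    using that alpha_equiv_refl unfolding motif_class_def by blast
  then have "\<Union> (iso_classes S M \<alpha>) = M"
    using iso_class_subset unfolding iso_classes_eq by blast
  moreover have "card (\<Union> (iso_classes S M \<alpha>)) = (\<Sum>K\<in>iso_classes S M \<alpha>. card K)"
  proof (rule card_Union_disjoint)
    show "pairwise disjnt (iso_classes S M \<alpha>)"
    proof (rule pairwiseI)
      fix K L assume KL: "K \<in> iso_classes S M \<alpha>" "L \<in> iso_classes S M \<alpha>" "K \<noteq> L"
      have "p \<notin> L" if "p \<in> K" for p
        using that KL iso_class_subset[OF KL(1)] mem_iso_class_iff[of p M] by blast
      then show "disjnt K L" unfolding disjnt_def by blast
    qed
    show "finite K" if "K \<in> iso_classes S M \<alpha>" for K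
      using iso_class_subset[OF that] assms(1) by (rule finite_subset)
  qed
  ultimately have "(\<Sum>K\<in>iso_classes S M \<alpha>. real (card K)) = real (card M)"
    by (metis of_nat_sum)
  then show ?thesis
    using assms unfolding iso_weight_def by (simp add: sum_divide_distrib[symmetric])
qed

definition transport_plan ::
  "'i set \<Rightarrow> 'j set \<Rightarrow> ('i \<Rightarrow> real) \<Rightarrow> ('j \<Rightarrow> real) \<Rightarrow> ('i \<Rightarrow> 'j \<Rightarrow> real) \<Rightarrow> bool" where
  "transport_plan I J w v F \<longleftrightarrow>
     (\<forall>i\<in>I. \<forall>j\<in>J. F i j \<in> {0..1}) \<and>
     (\<forall>i\<in>I. (\<Sum>j\<in>J. F i j) \<le> w i) \<and> (\<forall>j\<in>J. (\<Sum>i\<in>I. F i j) \<le> v j) \<and>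
     (\<Sum>i\<in>I. \<Sum>j\<in>J. F i j) = 1"

lemma EMD_iso_le_transport_cost:
  assumes plan: "transport_plan (iso_classes S MotS \<alpha>) (iso_classes Q MotQ \<alpha>)
      (iso_weight MotS) (iso_weight MotQ) F"
    and nonneg: "\<And>K L. K \<in> iso_classes S MotS \<alpha> \<Longrightarrow> L \<in> iso_classes Q MotQ \<alpha> \<Longrightarrow>
      0 \<le> dC S (class_rep K) Q (class_rep L) \<alpha>"
  shows "EMD_iso S MotS Q MotQ \<alpha> \<le> (\<Sum>K\<in>iso_classes S MotS \<alpha>. \<Sum>L\<in>iso_classes Q MotQ \<alpha>.
      F K L * dC S (class_rep K) Q (class_rep L) \<alpha>)"
proof -
  let ?cost = "\<lambda>F. \<Sum>K\<in>iso_classes S MotS \<alpha>. \<Sum>L\<in>iso_classes Q MotQ \<alpha>.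
      F K L * dC S (class_rep K) Q (class_rep L) \<alpha>"
  have "EMD_iso S MotS Q MotQ \<alpha> = Inf {?cost F | F. transport_plan (iso_classes S MotS \<alpha>)
      (iso_classes Q MotQ \<alpha>) (iso_weight MotS) (iso_weight MotQ) F}"
    unfolding EMD_iso_def transport_plan_def ..
  also have "\<dots> \<le> ?cost F"
    using plan nonneg unfolding transport_plan_def
    by (intro cInf_lower bdd_belowI[of _ 0]) (auto intro!: sum_nonneg mult_nonneg_nonneg)
  finally show ?thesis .
qed

locale partial_transport_plan =
  fixes I :: "'i set" and J :: "'j set" and w :: "'i \<Rightarrow> real" and v :: "'j \<Rightarrow> real"
    and H :: "'i \<Rightarrow> 'j \<Rightarrow> real" and \<tau> :: real
  assumes finite_rows: "finite I" and finite_columns: "finite J"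
    and row_weights: "\<And>i. i \<in> I \<Longrightarrow> 0 \<le> w i" "sum w I = 1"
    and column_weights: "\<And>j. j \<in> J \<Longrightarrow> 0 \<le> v j" "sum v J = 1"
    and nonneg: "\<And>i j. i \<in> I \<Longrightarrow> j \<in> J \<Longrightarrow> 0 \<le> H i j"
    and row_sums: "\<And>i. i \<in> I \<Longrightarrow> (\<Sum>j\<in>J. H i j) = \<tau> * w i"
    and column_sums: "\<And>j. j \<in> J \<Longrightarrow> (\<Sum>i\<in>I. H i j) \<le> v j"
begin

definition column_sum :: "'j \<Rightarrow> real" where
  "column_sum j = (\<Sum>i\<in>I. H i j)"

definition deficit :: "'i \<Rightarrow> 'j \<Rightarrow> real" where
  "deficit i j = w i * (v j - column_sum j)"

definition completion :: "'i \<Rightarrow> 'j \<Rightarrow> real" where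
  "completion i j = H i j + deficit i j"

lemma deficit_nonneg: "i \<in> I \<Longrightarrow> j \<in> J \<Longrightarrow> 0 \<le> deficit i j"
  unfolding deficit_def column_sum_def using row_weights(1) column_sums by simp

lemma sum_column_sum: "sum column_sum J = \<tau>"
proof -
  have "sum column_sum J = (\<Sum>i\<in>I. \<Sum>j\<in>J. H i j)" unfolding column_sum_def by (rule sum.swap)
  also have "\<dots> = \<tau>" using row_sums row_weights(2) by (simp add: sum_distrib_left[symmetric])
  finally show ?thesis .
qed

lemma deficit_row_sum: "(\<Sum>j\<in>J. deficit i j) = (1 - \<tau>) * w i"
  unfolding deficit_def using column_weights(2) sum_column_sum
  by (simp add: sum_distrib_left[symmetric] sum_subtractf)

lemma deficit_column_sum: "(\<Sum>i\<in>I. deficit i j) = v j - column_sum j"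
  unfolding deficit_def using row_weights(2) by (simp add: sum_distrib_right[symmetric])

lemma transport_plan_completion: "transport_plan I J w v completion"
  unfolding transport_plan_def
proof (intro conjI ballI)
  fix i j assume ij: "i \<in> I" "j \<in> J"
  have "w i \<le> sum w I" using row_weights(1) finite_rows ij(1) by (intro member_le_sum) auto
  then have "deficit i j \<le> v j - column_sum j"
    unfolding deficit_def using row_weights column_sums[OF ij(2)] ij(1)
    by (simp add: column_sum_def mult_left_le_one_le)
  moreover have "H i j \<le> column_sum j"
    unfolding column_sum_def using nonneg ij finite_rows by (intro member_le_sum) auto
  moreover have "v j \<le> sum v J" using column_weights(1) finite_columns ij(2) by (intro member_le_sum) auto
  ultimately show "completion i j \<in> {0..1}"
    unfolding completion_def using nonneg[OF ij] deficit_nonneg[OF ij] column_weights(2) by simp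
next
  fix i assume "i \<in> I"
  show "(\<Sum>j\<in>J. completion i j) \<le> w i"
    unfolding completion_def sum.distrib row_sums[OF \<open>i \<in> I\<close>] deficit_row_sum
    by (simp add: algebra_simps)
next
  fix j assume "j \<in> J"
  show "(\<Sum>i\<in>I. completion i j) \<le> v j"
    unfolding completion_def sum.distrib deficit_column_sum by (simp add: column_sum_def)
next
  show "(\<Sum>i\<in>I. \<Sum>j\<in>J. completion i j) = 1"
    unfolding completion_def sum.distrib deficit_row_sum using row_sums row_weights(2)
    by (simp add: sum_distrib_left[symmetric] sum_distrib_right[symmetric])
qed

lemma completion_cost_le:
  assumes "\<And>i j. i \<in> I \<Longrightarrow> j \<in> J \<Longrightarrow> D i j \<le> \<alpha>"
  shows "(\<Sum>i\<in>I. \<Sum>j\<in>J. completion i j * D i j) \<le> (\<Sum>i\<in>I. \<Sum>j\<in>J. H i j * D i j) + (1 - \<tau>) * \<alpha>"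
proof -
  have "(\<Sum>i\<in>I. \<Sum>j\<in>J. deficit i j * D i j) \<le> (\<Sum>i\<in>I. \<Sum>j\<in>J. deficit i j * \<alpha>)"
    using deficit_nonneg assms by (intro sum_mono mult_left_mono) auto
  also have "\<dots> = (1 - \<tau>) * \<alpha>"
    using row_weights(2) by (simp add: sum_distrib_right[symmetric] deficit_row_sum sum_distrib_left[symmetric])
  finally show ?thesis unfolding completion_def distrib_right sum.distrib by simp
qed

end

locale periodic_point_set =
  fixes B M S :: "'a::euclidean_space set"
  assumes periodic: "periodic_rep B M S"
begin

lemma independent_basis: "independent B"
  and card_basis: "card B = DIM('a)"
  and finite_motif: "finite M"
  and motif_nonempty: "M \<noteq> {}"
  and motif_unit_cell: "M \<subseteq> unit_cell B"
  and mem_iff: "x \<in> S \<longleftrightarrow> (\<exists>p\<in>M. \<exists>l\<in>lattice B. x = p + l)"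
  using periodic unfolding periodic_rep_def by auto

lemma motif_lattice_decomposition_unique:
  assumes "p \<in> M" "p' \<in> M" "l \<in> lattice B" "l' \<in> lattice B" "p + l = p' + l'"
  shows "p = p'" "l = l'"
proof -
  show "p = p'"
    using unit_cell_lattice_decomposition_unique[OF independent_basis _ _ assms(3-5)]
      assms(1,2) motif_unit_cell by blast
  with assms(5) show "l = l'" by simp
qed

lemma motif_subset: "M \<subseteq> S"
  using mem_iff zero_in_lattice by fastforce

lemma add_lattice_mem_iff:
  assumes "l \<in> lattice B"
  shows "x + l \<in> S \<longleftrightarrow> x \<in> S"
proof
  assume "x + l \<in> S"
  then obtain p l' where "p \<in> M" "l' \<in> lattice B" "x + l = p + l'" using mem_iff by blast
  moreover have "x = p + (l' - l)" using \<open>x + l = p + l'\<close> by (simp add: algebra_simps)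
  ultimately show "x \<in> S" using mem_iff lattice_diff[OF _ assms] by blast
next
  assume "x \<in> S"
  then obtain p l' where "p \<in> M" "l' \<in> lattice B" "x = p + l'" using mem_iff by blast
  moreover have "x + l = p + (l' + l)" using \<open>x = p + l'\<close> by (simp add: algebra_simps)
  ultimately show "x + l \<in> S" using mem_iff lattice_add[OF _ assms] by blast
qed

lemma alpha_equiv_add_lattice:
  assumes "l \<in> lattice B"
  shows "alpha_equiv S \<alpha> (x + l) x"
proof -
  have "isometry (\<lambda>y. y - l)" unfolding isometry_def by (simp add: dist_norm)
  moreover have "(\<lambda>y. y - l) ` cluster S (x + l) \<alpha> = cluster S x \<alpha>"
  proof -
    have "y \<in> cluster S (x + l) \<alpha> \<longleftrightarrow> y - l \<in> cluster S x \<alpha>" for y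
      using add_lattice_mem_iff[OF assms, of "y - l"] unfolding cluster_def
      by (simp add: dist_norm algebra_simps)
    then show ?thesis by (auto intro: image_eqI[of _ _ "_ + l"])
  qed
  ultimately show ?thesis unfolding alpha_equiv_def by force
qed

lemma motif_class_mem_iso_classes:
  assumes "x \<in> S"
  shows "motif_class S M \<alpha> x \<in> iso_classes S M \<alpha>"
proof -
  obtain p l where "p \<in> M" "l \<in> lattice B" "x = p + l" using assms mem_iff by blast
  then show ?thesis
    using motif_class_alpha_equiv[OF alpha_equiv_add_lattice] unfolding iso_classes_eq by auto
qed

definition motif_radius :: real where
  "motif_radius = Max (norm ` M)"

lemma norm_le_motif_radius: "p \<in> M \<Longrightarrow> norm p \<le> motif_radius"
  unfolding motif_radius_def using finite_motif by simp

lemma motif_radius_nonneg: "0 \<le> motif_radius"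
  using norm_le_motif_radius motif_nonempty norm_ge_zero order_trans by blast

definition translates :: "'a set \<Rightarrow> real \<Rightarrow> 'a set" where
  "translates A R = (\<lambda>(p, l). p + l) ` (A \<times> (lattice B \<inter> cball 0 R))"

lemma card_translates:
  assumes "A \<subseteq> M"
  shows "card (translates A R) = card A * lattice_count B R"
proof -
  have "inj_on (\<lambda>(p, l). p + l) (A \<times> (lattice B \<inter> cball 0 R))"
  proof (rule inj_onI, clarsimp)
    fix p l p' l' assume "p \<in> A" "l \<in> lattice B" "p' \<in> A" "l' \<in> lattice B" "p + l = p' + l'"
    then show "p = p' \<and> l = l'"
      using assms motif_lattice_decomposition_unique[of p p' l l'] by auto
  qed
  then show ?thesis
    unfolding translates_def lattice_count_def by (simp add: card_image card_cartesian_product)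
qed

lemma finite_translates: "finite A \<Longrightarrow> finite (translates A R)"
  unfolding translates_def using finite_lattice_cball[OF independent_basis card_basis] by simp

lemma translates_subset:
  assumes "A \<subseteq> M"
  shows "translates A R \<subseteq> S \<inter> cball 0 (R + motif_radius)"
proof
  fix y assume "y \<in> translates A R"
  then obtain p l where "p \<in> A" "l \<in> lattice B" "norm l \<le> R" "y = p + l"
    unfolding translates_def by auto
  moreover have "norm (p + l) \<le> norm p + norm l" by (rule norm_triangle_ineq)
  ultimately show "y \<in> S \<inter> cball 0 (R + motif_radius)"
    using assms mem_iff norm_le_motif_radius[of p] by fastforce
qed

lemma cball_decomposition:
  assumes "y \<in> S" "norm y \<le> R"
  shows "\<exists>p\<in>M. \<exists>l\<in>lattice B \<inter> cball 0 (R + motif_radius). y = p + l"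
proof -
  obtain p l where pl: "p \<in> M" "l \<in> lattice B" "y = p + l" using assms(1) mem_iff by blast
  have "norm l \<le> norm y + norm p" using pl(3) norm_triangle_ineq4[of y p] by simp
  then have "norm l \<le> R + motif_radius" using assms(2) norm_le_motif_radius[OF pl(1)] by linarith
  then have "l \<in> lattice B \<inter> cball 0 (R + motif_radius)" using pl(2) by simp
  then show ?thesis using pl(1,3) by blast
qed

lemma cball_subset_translates: "S \<inter> cball 0 R \<subseteq> translates M (R + motif_radius)"
proof
  fix y assume "y \<in> S \<inter> cball 0 R"
  then obtain p l where "p \<in> M" "l \<in> lattice B \<inter> cball 0 (R + motif_radius)" "y = p + l"
    using cball_decomposition[of y R] by auto
  then show "y \<in> translates M (R + motif_radius)" unfolding translates_def by auto
qed

lemma motif_class_translate: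
  assumes "p \<in> M" "l \<in> lattice B" "K \<in> iso_classes S M \<alpha>"
  shows "motif_class S M \<alpha> (p + l) = K \<longleftrightarrow> p \<in> K"
  using motif_class_alpha_equiv[OF alpha_equiv_add_lattice[OF assms(2)]] mem_iso_class_iff[OF assms(1,3)]
  by simp

lemma translates_motif_class:
  assumes "K \<in> iso_classes S M \<alpha>"
  shows "{x \<in> translates M R. motif_class S M \<alpha> x = K} = translates K R"
  using motif_class_translate[OF _ _ assms] iso_class_subset[OF assms]
  unfolding translates_def by auto

lemma class_cball_subset_translates:
  assumes "K \<in> iso_classes S M \<alpha>"
  shows "{y \<in> S \<inter> cball 0 R. motif_class S M \<alpha> y = K} \<subseteq> translates K (R + motif_radius)"
proof
  fix y assume y: "y \<in> {y \<in> S \<inter> cball 0 R. motif_class S M \<alpha> y = K}"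
  then obtain p l where "p \<in> M" "l \<in> lattice B \<inter> cball 0 (R + motif_radius)" "y = p + l"
    using cball_decomposition[of y R] by auto
  then show "y \<in> translates K (R + motif_radius)"
    using y motif_class_translate[OF _ _ assms] unfolding translates_def by auto
qed

lemma locally_finite: "locally_finite S"
  unfolding locally_finite_def
proof (intro allI)
  fix c :: 'a and r :: real
  have "S \<inter> cball c r \<subseteq> S \<inter> cball 0 (norm c + r)"
  proof
    fix x assume "x \<in> S \<inter> cball c r"
    moreover have "norm x \<le> norm c + norm (x - c)" using norm_triangle_ineq2[of x c] by simp
    ultimately show "x \<in> S \<inter> cball 0 (norm c + r)" by (auto simp: dist_norm norm_minus_commute)
  qed
  also have "\<dots> \<subseteq> translates M (norm c + r + motif_radius)" by (rule cball_subset_translates)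
  finally show "finite (S \<inter> cball c r)"
    using finite_translates[OF finite_motif] by (rule finite_subset)
qed

lemma lattice_count_mono: "r \<le> s \<Longrightarrow> lattice_count B r \<le> lattice_count B s"
  unfolding lattice_count_def using finite_lattice_cball[OF independent_basis card_basis]
  by (intro card_mono) auto

lemma lattice_count_pos:
  assumes "r \<ge> 0" shows "0 < lattice_count B r"
proof -
  have "0 \<in> lattice B \<inter> cball 0 r" using assms zero_in_lattice by simp
  then show ?thesis unfolding lattice_count_def
    using finite_lattice_cball[OF independent_basis card_basis] by (auto simp: card_gt_0_iff)
qed

end

lemma sum_card_fibers:
  assumes "finite A" "finite I" "h ` A \<subseteq> I"
  shows "(\<Sum>i\<in>I. card {a \<in> A. h a = i}) = card A"
  using sum.group[OF assms, of "\<lambda>_. 1::nat"] by simp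

locale periodic_bijection =
  S: periodic_point_set BS MotS S + Q: periodic_point_set BQ MotQ Q
  for BS MotS S BQ MotQ Q :: "'a::euclidean_space set" +
  fixes g :: "'a \<Rightarrow> 'a" and \<delta> \<alpha> :: real
  assumes bij: "bij_betw g S Q"
    and displacement: "\<And>x. x \<in> S \<Longrightarrow> dist x (g x) \<le> \<delta>"
    and alpha_nonneg: "0 \<le> \<alpha>"
begin

lemma displacement_nonneg: "0 \<le> \<delta>"
  using displacement S.motif_subset S.motif_nonempty zero_le_dist order_trans by blast

definition pair_count :: "real \<Rightarrow> 'a set \<Rightarrow> 'a set \<Rightarrow> nat" where
  "pair_count R K L = card {x \<in> S.translates MotS R.
     motif_class S MotS \<alpha> x = K \<and> motif_class Q MotQ \<alpha> (g x) = L}"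

lemma pair_count_row_sum:
  assumes "K \<in> iso_classes S MotS \<alpha>"
  shows "(\<Sum>L\<in>iso_classes Q MotQ \<alpha>. pair_count R K L) = card K * lattice_count BS R"
proof -
  let ?A = "{x \<in> S.translates MotS R. motif_class S MotS \<alpha> x = K}"
  have "(\<lambda>x. motif_class Q MotQ \<alpha> (g x)) ` ?A \<subseteq> iso_classes Q MotQ \<alpha>"
    using S.translates_subset[OF order_refl] bij_betwE[OF bij] Q.motif_class_mem_iso_classes by blast
  then have "(\<Sum>L\<in>iso_classes Q MotQ \<alpha>. card {x \<in> ?A. motif_class Q MotQ \<alpha> (g x) = L}) = card ?A"
    using S.finite_translates[OF S.finite_motif] finite_iso_classes[OF Q.finite_motif]
    by (intro sum_card_fibers) auto
  moreover have "{x \<in> ?A. motif_class Q MotQ \<alpha> (g x) = L} = {x \<in> S.translates MotS R.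
      motif_class S MotS \<alpha> x = K \<and> motif_class Q MotQ \<alpha> (g x) = L}" for L
    by blast
  ultimately show ?thesis
    unfolding pair_count_def S.translates_motif_class[OF assms]
    using S.card_translates[OF iso_class_subset[OF assms]] by simp
qed

lemma image_translates_subset:
  "g ` S.translates MotS R \<subseteq> Q \<inter> cball 0 (R + S.motif_radius + \<delta>)"
proof
  fix y assume "y \<in> g ` S.translates MotS R"
  then obtain x where x: "x \<in> S.translates MotS R" "y = g x" by blast
  then have "x \<in> S" "norm x \<le> R + S.motif_radius"
    using S.translates_subset[OF order_refl, of R] by auto
  moreover have "norm (g x) \<le> norm x + dist x (g x)"
    using norm_triangle_ineq2[of "g x" x] by (simp add: dist_norm norm_minus_commute)
  ultimately show "y \<in> Q \<inter> cball 0 (R + S.motif_radius + \<delta>)"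
    using displacement[of x] bij_betwE[OF bij] x(2) by fastforce
qed

lemma pair_count_column_sum_le:
  assumes "L \<in> iso_classes Q MotQ \<alpha>"
  shows "(\<Sum>K\<in>iso_classes S MotS \<alpha>. pair_count R K L)
    \<le> card L * lattice_count BQ (R + S.motif_radius + \<delta> + Q.motif_radius)"
proof -
  let ?A = "{x \<in> S.translates MotS R. motif_class Q MotQ \<alpha> (g x) = L}"
  let ?r = "R + S.motif_radius + \<delta>"
  have "(\<lambda>x. motif_class S MotS \<alpha> x) ` ?A \<subseteq> iso_classes S MotS \<alpha>"
    using S.translates_subset[OF order_refl] S.motif_class_mem_iso_classes by blast
  then have "(\<Sum>K\<in>iso_classes S MotS \<alpha>. card {x \<in> ?A. motif_class S MotS \<alpha> x = K}) = card ?A"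
    using S.finite_translates[OF S.finite_motif] finite_iso_classes[OF S.finite_motif]
    by (intro sum_card_fibers) auto
  moreover have "{x \<in> ?A. motif_class S MotS \<alpha> x = K} = {x \<in> S.translates MotS R.
      motif_class S MotS \<alpha> x = K \<and> motif_class Q MotQ \<alpha> (g x) = L}" for K
    by blast
  moreover have "card (g ` ?A) = card ?A"
    using S.translates_subset[OF order_refl]
    by (intro card_image inj_on_subset[OF bij_betw_imp_inj_on[OF bij]]) auto
  ultimately have "(\<Sum>K\<in>iso_classes S MotS \<alpha>. pair_count R K L) = card (g ` ?A)"
    unfolding pair_count_def by simp
  also have "\<dots> \<le> card {y \<in> Q \<inter> cball 0 ?r. motif_class Q MotQ \<alpha> y = L}"
  proof (rule card_mono)
    have "finite (Q \<inter> cball 0 ?r)" using Q.locally_finite unfolding locally_finite_def by blast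
    then show "finite {y \<in> Q \<inter> cball 0 ?r. motif_class Q MotQ \<alpha> y = L}"
      by (rule rev_finite_subset) blast
    show "g ` ?A \<subseteq> {y \<in> Q \<inter> cball 0 ?r. motif_class Q MotQ \<alpha> y = L}"
      using image_translates_subset[of R] by blast
  qed
  also have "\<dots> \<le> card (Q.translates L (?r + Q.motif_radius))"
    using Q.class_cball_subset_translates[OF assms]
      Q.finite_translates[OF finite_subset[OF iso_class_subset[OF assms] Q.finite_motif]]
    by (rule card_mono[rotated])
  also have "\<dots> = card L * lattice_count BQ (?r + Q.motif_radius)"
    by (rule Q.card_translates[OF iso_class_subset[OF assms]])
  finally show ?thesis .
qed

lemma motif_count_le:
  "card MotQ * lattice_count BQ r \<le> card MotS * lattice_count BS (r + Q.motif_radius + \<delta> + S.motif_radius)"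
proof -
  let ?r = "r + Q.motif_radius + \<delta>"
  have "card MotQ * lattice_count BQ r = card (Q.translates MotQ r)"
    by (rule Q.card_translates[symmetric, OF order_refl])
  also have "\<dots> \<le> card (Q \<inter> cball 0 (r + Q.motif_radius))"
    using Q.translates_subset[OF order_refl] Q.locally_finite unfolding locally_finite_def
    by (intro card_mono) auto
  also have "\<dots> \<le> card (g ` (S \<inter> cball 0 ?r))"
  proof (rule card_mono)
    show "finite (g ` (S \<inter> cball 0 ?r))"
      using S.locally_finite unfolding locally_finite_def by simp
    show "Q \<inter> cball 0 (r + Q.motif_radius) \<subseteq> g ` (S \<inter> cball 0 ?r)"
    proof
      fix y assume y: "y \<in> Q \<inter> cball 0 (r + Q.motif_radius)"
      then obtain x where x: "x \<in> S" "y = g x" using bij unfolding bij_betw_def by auto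
      have "norm x \<le> norm y + dist x y"
        using norm_triangle_ineq2[of x y] by (simp add: dist_norm)
      then have "norm x \<le> ?r" using y displacement[OF x(1)] x(2) by simp
      then show "y \<in> g ` (S \<inter> cball 0 ?r)" using x by auto
    qed
  qed
  also have "\<dots> \<le> card (S \<inter> cball 0 ?r)"
    using S.locally_finite unfolding locally_finite_def by (intro card_image_le) simp
  also have "\<dots> \<le> card (S.translates MotS (?r + S.motif_radius))"
    using S.cball_subset_translates S.finite_translates[OF S.finite_motif] by (rule card_mono[rotated])
  also have "\<dots> = card MotS * lattice_count BS (?r + S.motif_radius)"
    by (rule S.card_translates[OF order_refl])
  finally show ?thesis .
qed

lemma class_rep_mem_S: "K \<in> iso_classes S MotS \<alpha> \<Longrightarrow> class_rep K \<in> S"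
  using class_rep_mem iso_class_subset S.motif_subset by blast

lemma class_rep_mem_Q: "L \<in> iso_classes Q MotQ \<alpha> \<Longrightarrow> class_rep L \<in> Q"
  using class_rep_mem iso_class_subset Q.motif_subset by blast

lemma dC_class_reps_bounds:
  assumes "K \<in> iso_classes S MotS \<alpha>" "L \<in> iso_classes Q MotQ \<alpha>"
  shows "dC S (class_rep K) Q (class_rep L) \<alpha> \<le> \<alpha>" "0 \<le> dC S (class_rep K) Q (class_rep L) \<alpha>"
  using dC_bounds[OF S.locally_finite Q.locally_finite class_rep_mem_S[OF assms(1)]
      class_rep_mem_Q[OF assms(2)] alpha_nonneg] .

lemma dC_class_reps_le:
  assumes "pair_count R K L \<noteq> 0" "K \<in> iso_classes S MotS \<alpha>" "L \<in> iso_classes Q MotQ \<alpha>"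
  shows "dC S (class_rep K) Q (class_rep L) \<alpha> \<le> 2 * \<delta>"
proof -
  have "{x \<in> S.translates MotS R. motif_class S MotS \<alpha> x = K \<and> motif_class Q MotQ \<alpha> (g x) = L} \<noteq> {}"
    using assms(1) unfolding pair_count_def by (metis card.empty)
  then obtain x where x: "x \<in> S.translates MotS R"
      "motif_class S MotS \<alpha> x = K" "motif_class Q MotQ \<alpha> (g x) = L"
    by blast
  have "x \<in> S" using x(1) S.translates_subset[OF order_refl] by auto
  have "alpha_equiv S \<alpha> x (class_rep K)"
    using class_rep_mem[OF assms(2)] x(2) unfolding motif_class_def by auto
  moreover have "alpha_equiv Q \<alpha> (g x) (class_rep L)"
    using class_rep_mem[OF assms(3)] x(3) unfolding motif_class_def by auto
  ultimately have "dC S (class_rep K) Q (class_rep L) \<alpha> = dC S x Q (g x) \<alpha>"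
    by (simp add: dC_alpha_equiv_left[of S \<alpha> x] dC_alpha_equiv_right[of Q \<alpha> "g x"])
  also have "\<dots> \<le> 2 * \<delta>"
    by (rule dC_le_twice_displacement[OF S.locally_finite Q.locally_finite bij displacement
          \<open>x \<in> S\<close> alpha_nonneg])
  finally show ?thesis .
qed


definition margin :: real where
  "margin = S.motif_radius + \<delta> + Q.motif_radius"

lemma margin_nonneg: "0 \<le> margin"
  unfolding margin_def using S.motif_radius_nonneg Q.motif_radius_nonneg displacement_nonneg by simp

definition shell_ratio :: "real \<Rightarrow> real" where
  "shell_ratio R = real (lattice_count BS R) / real (lattice_count BS (R + 2 * margin))"

definition count_plan :: "real \<Rightarrow> 'a set \<Rightarrow> 'a set \<Rightarrow> real" where
  "count_plan R K L =
     real (pair_count R K L) / (real (card MotS) * real (lattice_count BS (R + 2 * margin)))"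

lemma count_plan_denominator_pos:
  "0 \<le> R \<Longrightarrow> 0 < real (card MotS) * real (lattice_count BS (R + 2 * margin))"
  using S.lattice_count_pos[of "R + 2 * margin"] margin_nonneg S.finite_motif S.motif_nonempty
  by (simp add: card_gt_0_iff)

lemma count_plan_row_sum:
  assumes "0 \<le> R" "K \<in> iso_classes S MotS \<alpha>"
  shows "(\<Sum>L\<in>iso_classes Q MotQ \<alpha>. count_plan R K L) = shell_ratio R * iso_weight MotS K"
proof -
  have "(\<Sum>L\<in>iso_classes Q MotQ \<alpha>. real (pair_count R K L)) = real (card K) * real (lattice_count BS R)"
    using pair_count_row_sum[OF assms(2), of R] by (metis of_nat_mult of_nat_sum)
  then show ?thesis
    unfolding count_plan_def sum_divide_distrib[symmetric] shell_ratio_def iso_weight_def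
    using count_plan_denominator_pos[OF assms(1)] by (simp add: field_simps)
qed

lemma count_plan_column_sum_le:
  assumes "0 \<le> R" "L \<in> iso_classes Q MotQ \<alpha>"
  shows "(\<Sum>K\<in>iso_classes S MotS \<alpha>. count_plan R K L) \<le> iso_weight MotQ L"
proof -
  let ?r = "R + S.motif_radius + \<delta> + Q.motif_radius"
  let ?d = "real (card MotS) * real (lattice_count BS (R + 2 * margin))"
  have "real (card MotQ) * real (lattice_count BQ ?r) \<le> ?d"
    using motif_count_le[of ?r] unfolding margin_def by (simp add: algebra_simps flip: of_nat_mult)
  moreover have "(\<Sum>K\<in>iso_classes S MotS \<alpha>. real (pair_count R K L)) \<le> real (card L) * real (lattice_count BQ ?r)"
    using pair_count_column_sum_le[OF assms(2), of R] by (metis of_nat_le_iff of_nat_mult of_nat_sum)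
  ultimately have "real (card MotQ) * (\<Sum>K\<in>iso_classes S MotS \<alpha>. real (pair_count R K L)) \<le> real (card L) * ?d"
    by (smt (verit) mult.left_commute mult_left_mono of_nat_0_le_iff)
  then show ?thesis
    unfolding count_plan_def sum_divide_distrib[symmetric] iso_weight_def
    using count_plan_denominator_pos[OF assms(1)] Q.finite_motif Q.motif_nonempty
    by (simp add: field_simps card_gt_0_iff)
qed

lemma partial_transport_plan_count_plan:
  assumes "0 \<le> R"
  shows "partial_transport_plan (iso_classes S MotS \<alpha>) (iso_classes Q MotQ \<alpha>)
    (iso_weight MotS) (iso_weight MotQ) (count_plan R) (shell_ratio R)"
proof
  show "sum (iso_weight MotS) (iso_classes S MotS \<alpha>) = 1"
    using S.finite_motif S.motif_nonempty by (rule sum_iso_weight)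
  show "sum (iso_weight MotQ) (iso_classes Q MotQ \<alpha>) = 1"
    using Q.finite_motif Q.motif_nonempty by (rule sum_iso_weight)
  show "0 \<le> count_plan R K L" for K L
    unfolding count_plan_def using count_plan_denominator_pos[OF assms] by simp
qed (use count_plan_row_sum count_plan_column_sum_le assms S.finite_motif Q.finite_motif
    in \<open>auto simp: iso_weight_def finite_iso_classes\<close>)

lemma count_plan_cost_le:
  assumes "0 \<le> R"
  shows "(\<Sum>K\<in>iso_classes S MotS \<alpha>. \<Sum>L\<in>iso_classes Q MotQ \<alpha>.
      count_plan R K L * dC S (class_rep K) Q (class_rep L) \<alpha>) \<le> 2 * \<delta> * shell_ratio R"
proof -
  have "(\<Sum>K\<in>iso_classes S MotS \<alpha>. \<Sum>L\<in>iso_classes Q MotQ \<alpha>.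
        count_plan R K L * dC S (class_rep K) Q (class_rep L) \<alpha>)
      \<le> (\<Sum>K\<in>iso_classes S MotS \<alpha>. \<Sum>L\<in>iso_classes Q MotQ \<alpha>. count_plan R K L * (2 * \<delta>))"
  proof (intro sum_mono)
    fix K L assume KL: "K \<in> iso_classes S MotS \<alpha>" "L \<in> iso_classes Q MotQ \<alpha>"
    show "count_plan R K L * dC S (class_rep K) Q (class_rep L) \<alpha> \<le> count_plan R K L * (2 * \<delta>)"
    proof (cases "pair_count R K L = 0")
      case False
      moreover have "0 \<le> count_plan R K L"
        unfolding count_plan_def using count_plan_denominator_pos[OF assms] by simp
      ultimately show ?thesis using dC_class_reps_le[OF False KL] by (intro mult_left_mono)
    qed (simp add: count_plan_def)
  qed
  also have "\<dots> = 2 * \<delta> * shell_ratio R"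
    using count_plan_row_sum[OF assms] sum_iso_weight[OF S.finite_motif S.motif_nonempty, of S \<alpha>]
    by (simp add: sum_distrib_right[symmetric] sum_distrib_left[symmetric] algebra_simps)
  finally show ?thesis .
qed

lemma EMD_iso_le_thin_shell:
  fixes R \<eta> :: real
  assumes "0 \<le> R"
    and shell: "(1 - \<eta>) * real (lattice_count BS (R + 2 * margin)) \<le> real (lattice_count BS R)"
  shows "EMD_iso S MotS Q MotQ \<alpha> \<le> 2 * \<delta> + \<eta> * \<alpha>"
proof -
  interpret plan: partial_transport_plan "iso_classes S MotS \<alpha>" "iso_classes Q MotQ \<alpha>"
      "iso_weight MotS" "iso_weight MotQ" "count_plan R" "shell_ratio R"
    using partial_transport_plan_count_plan[OF assms(1)] .
  have N_pos: "0 < real (lattice_count BS (R + 2 * margin))"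
    using S.lattice_count_pos \<open>0 \<le> R\<close> margin_nonneg by simp
  have ratio: "1 - \<eta> \<le> shell_ratio R" "shell_ratio R \<le> 1"
    unfolding shell_ratio_def using shell N_pos S.lattice_count_mono[of R "R + 2 * margin"] margin_nonneg
    by (simp_all add: field_simps)
  have "EMD_iso S MotS Q MotQ \<alpha> \<le> (\<Sum>K\<in>iso_classes S MotS \<alpha>. \<Sum>L\<in>iso_classes Q MotQ \<alpha>.
      plan.completion K L * dC S (class_rep K) Q (class_rep L) \<alpha>)"
    by (rule EMD_iso_le_transport_cost[OF plan.transport_plan_completion dC_class_reps_bounds(2)])
  also have "\<dots> \<le> 2 * \<delta> * shell_ratio R + (1 - shell_ratio R) * \<alpha>"
    using plan.completion_cost_le[where D = "\<lambda>K L. dC S (class_rep K) Q (class_rep L) \<alpha>",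
        OF dC_class_reps_bounds(1)] count_plan_cost_le[OF assms(1)]
    by linarith
  also have "\<dots> \<le> 2 * \<delta> + \<eta> * \<alpha>"
  proof (rule add_mono)
    show "2 * \<delta> * shell_ratio R \<le> 2 * \<delta>"
      using mult_left_mono[OF ratio(2), of "2 * \<delta>"] displacement_nonneg by simp
    show "(1 - shell_ratio R) * \<alpha> \<le> \<eta> * \<alpha>"
      using ratio(1) alpha_nonneg by (intro mult_right_mono) auto
  qed
  finally show ?thesis .
qed

lemma EMD_iso_le_twice_displacement: "EMD_iso S MotS Q MotQ \<alpha> \<le> 2 * \<delta>"
proof (rule field_le_epsilon)
  fix e :: real assume "0 < e"
  define \<eta> where "\<eta> = e / (\<alpha> + 1)"
  have "0 < \<eta>" unfolding \<eta>_def using \<open>0 < e\<close> alpha_nonneg by simp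
  obtain C where "C > 0" and poly: "\<And>R. R \<ge> 0 \<Longrightarrow> real (lattice_count BS R) \<le> (C * R + 1) ^ DIM('a)"
    using lattice_count_polynomial_bound[OF S.independent_basis S.card_basis] by blast
  have "\<exists>R\<ge>0. (1 - \<eta>) * real (lattice_count BS (R + 2 * margin)) \<le> real (lattice_count BS R)"
  proof (rule polynomial_growth_thin_shell[where C = C and d = "DIM('a)"])
    show "real (lattice_count BS r) \<le> real (lattice_count BS s)" if "r \<le> s" for r s
      using S.lattice_count_mono[OF that] by simp
    show "0 < real (lattice_count BS 0)" using S.lattice_count_pos[of 0] by simp
  qed (use poly \<open>C > 0\<close> margin_nonneg \<open>0 < \<eta>\<close> in auto)
  then obtain R where "R \<ge> 0" and shell:
      "(1 - \<eta>) * real (lattice_count BS (R + 2 * margin)) \<le> real (lattice_count BS R)"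
    by blast
  have "\<eta> * \<alpha> \<le> e"
    unfolding \<eta>_def using alpha_nonneg \<open>0 < e\<close> by (simp add: field_simps)
  then show "EMD_iso S MotS Q MotQ \<alpha> \<le> 2 * \<delta> + e"
    using EMD_iso_le_thin_shell[OF \<open>R \<ge> 0\<close> shell] by linarith
qed

end

lemma EMD_iso_le_bottleneck_bound:
  fixes S Q BS MotS BQ MotQ :: "'a::euclidean_space set" and \<alpha> t :: real
  assumes "periodic_rep BS MotS S" "periodic_rep BQ MotQ Q" "\<alpha> \<ge> 0"
    and "bottleneck_dist S Q < ereal t"
  shows "EMD_iso S MotS Q MotQ \<alpha> \<le> 2 * t"
proof -
  obtain g where g: "bij_betw g S Q" "(SUP p\<in>S. ereal (norm (p - g p))) < ereal t"
    using assms(4) unfolding bottleneck_dist_def by (auto simp: INF_less_iff)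
  have "dist x (g x) \<le> t" if "x \<in> S" for x
  proof -
    have "ereal (norm (x - g x)) \<le> (SUP p\<in>S. ereal (norm (p - g p)))"
      using that by (rule SUP_upper)
    then have "ereal (norm (x - g x)) < ereal t" using g(2) by (rule le_less_trans)
    then show ?thesis by (simp add: dist_norm)
  qed
  then interpret periodic_bijection BS MotS S BQ MotQ Q g t \<alpha>
    using assms(1-3) g(1) by unfold_locales auto
  show ?thesis by (rule EMD_iso_le_twice_displacement)
qed

theorem mainTheorem4:
  fixes S Q BS MotS BQ MotQ :: "'a::euclidean_space set" and \<alpha> :: real
  assumes "periodic_rep BS MotS S"
    and "periodic_rep BQ MotQ Q"
    and "bottleneck_dist S Q < ereal (packing_radius Q)"
    and "\<alpha> \<ge> 0"
  shows "ereal (EMD_iso S MotS Q MotQ \<alpha>) \<le> 2 * bottleneck_dist S Q"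
proof (rule dense_ge)
  fix x assume x: "2 * bottleneck_dist S Q < x"
  show "ereal (EMD_iso S MotS Q MotQ \<alpha>) \<le> x"
  proof (cases x)
    case (real r)
    with x have "bottleneck_dist S Q < ereal (r / 2)"
      by (cases "bottleneck_dist S Q") auto
    then have "EMD_iso S MotS Q MotQ \<alpha> \<le> 2 * (r / 2)"
      by (rule EMD_iso_le_bottleneck_bound[OF assms(1,2,4)])
    then show ?thesis using real by simp
  qed (use x in auto)
qed

end
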